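(* Let ten lines in the Euclidean plane be given by polar coordinates $(r_i,\theta_i)$, $i=1,\dots,10$, and write $s_{ij}=\sin(\theta_j-\theta_i)$. Suppose that the triangles $(2,4,6)$, $(1,5,9)$, $(1,5,10)$, $(1,5,7)$ are positively oriented and the triangles $(1,3,7)$, $(1,4,7)$, $(3,5,8)$, $(2,8,9)$, $(6,7,10)$ are negatively oriented, where for each of these nine triangles $(i,j,k)$ we have $0<\theta_i<\theta_j<\theta_k<180$. Then $$s_{89}\,s_{1,10}\,s_{24}\,s_{35}\,s_{67}+s_{46}\,s_{19}\,s_{7,10}\,s_{35}\,s_{28}-s_{46}\,s_{38}\,s_{7,10}\,s_{29}\,s_{15}>0 .$$
   Context: Angles are in degrees. A line with polar coordinates $(r,\theta)$ is the line $\{(p,q)\in\mathbb{R}^2: p\cos\theta+q\sin\theta=r\}$, i.e. $r$ is the perpendicular distance from the origin and $\theta$ is the angle the perpendicular makes with the polar direction. No ordering $\theta_i<\theta_j$ for $i<j$ is assumed except those specified. For three lines $i,j,k$ with $\theta_i<\theta_j<\theta_k$, the triangle $(i,j,k)$ is called positively oriented if $r_i\sin(\theta_k-\theta_j)-r_j\sin(\theta_k-\theta_i)+r_k\sin(\theta_j-\theta_i)>0$ (geometrically: the origin lies in an unbounded face of the arrangement of the three lines bounded by three edges) and negatively oriented if $-r_i\sin(\theta_k-\theta_j)+r_j\sin(\theta_k-\theta_i)-r_k\sin(\theta_j-\theta_i)>0$ (the origin lies in an unbounded face with two edges). *)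

theory Defs
  imports Complex_Main
begin

definition sind :: "real \<Rightarrow> real" where
  "sind x = sin (x * pi / 180)"

text \<open>Lines are given by polar coordinates (r i, th i); angles in degrees.
  Orientation of the triangle (i,j,k), meant for th i < th j < th k.\<close>
definition pos_oriented :: "(nat \<Rightarrow> real) \<Rightarrow> (nat \<Rightarrow> real) \<Rightarrow> nat \<Rightarrow> nat \<Rightarrow> nat \<Rightarrow> bool" where
  "pos_oriented r th i j k \<longleftrightarrow>
     r i * sind (th k - th j) - r j * sind (th k - th i) + r k * sind (th j - th i) > 0"

definition neg_oriented :: "(nat \<Rightarrow> real) \<Rightarrow> (nat \<Rightarrow> real) \<Rightarrow> nat \<Rightarrow> nat \<Rightarrow> nat \<Rightarrow> bool" where
  "neg_oriented r th i j k \<longleftrightarrow>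
     - r i * sind (th k - th j) + r j * sind (th k - th i) - r k * sind (th j - th i) > 0"

definition angles_ordered :: "(nat \<Rightarrow> real) \<Rightarrow> nat \<Rightarrow> nat \<Rightarrow> nat \<Rightarrow> bool" where
  "angles_ordered th i j k \<longleftrightarrow> 0 < th i \<and> th i < th j \<and> th j < th k \<and> th k < 180"

end

theory Submission
  imports Defs
begin

text \<open>Writing \<open>T i j k\<close> for the orientation form of the triangle \<open>(i,j,k)\<close>, the claimed
  polynomial \<open>P\<close> in the sines satisfies an identity
  \<open>P \<cdot> T 1 5 7 = \<Sum> c\<^sub>t \<cdot> T t\<close> over the remaining eight triangles, where each \<open>c\<^sub>t\<close> is a
  product of five sines \<open>s\<^sub>i\<^sub>j\<close> with \<open>\<theta>\<^sub>i < \<theta>\<^sub>j\<close> inside one of the given triangles, signed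
  so that every summand is nonnegative, and the one for \<open>(2,4,6)\<close> strictly positive.
  Since \<open>T 1 5 7 > 0\<close>, this forces \<open>P > 0\<close>. The identity itself is a polynomial identity in
  \<open>cos \<theta>\<^sub>i, sin \<theta>\<^sub>i, r\<^sub>i\<close> once each \<open>s\<^sub>i\<^sub>j\<close> is expanded.\<close>

definition triangle_form :: "(nat \<Rightarrow> real) \<Rightarrow> (nat \<Rightarrow> real) \<Rightarrow> nat \<Rightarrow> nat \<Rightarrow> nat \<Rightarrow> real" where
  "triangle_form r th i j k =
     r i * sind (th k - th j) - r j * sind (th k - th i) + r k * sind (th j - th i)"

lemma pos_oriented_iff_triangle_form:
  "pos_oriented r th i j k \<longleftrightarrow> 0 < triangle_form r th i j k"
  unfolding pos_oriented_def triangle_form_def by simp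

lemma neg_oriented_iff_triangle_form:
  "neg_oriented r th i j k \<longleftrightarrow> triangle_form r th i j k < 0"
  unfolding neg_oriented_def triangle_form_def by linarith

lemma sind_diff:
  "sind (b - a) = cos (a * pi / 180) * sin (b * pi / 180) - sin (a * pi / 180) * cos (b * pi / 180)"
proof -
  have "sind (b - a) = sin (b * pi / 180 - a * pi / 180)"
    unfolding sind_def by (simp add: left_diff_distrib diff_divide_distrib)
  then show ?thesis
    unfolding sin_diff by (simp add: mult.commute)
qed

lemma sind_pos:
  assumes "0 < x" "x < 180"
  shows "0 < sind x"
  unfolding sind_def
proof (rule sin_gt_zero)
  show "0 < x * pi / 180" using assms by simp
  show "x * pi / 180 < pi" using assms by (simp add: divide_less_eq)
qed

lemma angles_ordered_sind_pos:
  assumes "angles_ordered th i j k"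
  shows "0 < sind (th j - th i)" "0 < sind (th k - th i)" "0 < sind (th k - th j)"
  using assms unfolding angles_ordered_def by (auto intro!: sind_pos)

lemma triangle_form_certificate:
  fixes r th :: "nat \<Rightarrow> real"
  defines "s \<equiv> \<lambda>i j. sind (th j - th i)" and "T \<equiv> triangle_form r th"
  shows "(s 8 9 * s 1 10 * s 2 4 * s 3 5 * s 6 7
          + s 4 6 * s 1 9 * s 7 10 * s 3 5 * s 2 8
          - s 4 6 * s 3 8 * s 7 10 * s 2 9 * s 1 5) * T 1 5 7
   = s 1 7 * s 8 9 * s 3 5 * s 1 5 * s 7 10 * T 2 4 6
   + s 4 6 * s 2 8 * s 1 7 * s 3 5 * s 7 10 * T 1 5 9
   + s 2 4 * s 6 7 * s 1 7 * s 8 9 * s 3 5 * T 1 5 10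
   - s 4 6 * s 2 9 * s 5 8 * s 1 5 * s 7 10 * T 1 3 7
   - s 2 6 * s 8 9 * s 3 5 * s 1 5 * s 7 10 * T 1 4 7
   - s 4 6 * s 2 9 * s 1 7 * s 1 5 * s 7 10 * T 3 5 8
   - s 4 6 * s 1 7 * s 3 5 * s 1 5 * s 7 10 * T 2 8 9
   - s 2 4 * s 1 7 * s 8 9 * s 3 5 * s 1 5 * T 6 7 10"
  unfolding s_def T_def triangle_form_def sind_diff by algebra

theorem theoremt:
  fixes r th :: "nat \<Rightarrow> real"
  assumes "angles_ordered th 2 4 6" "angles_ordered th 1 5 9"
    "angles_ordered th 1 5 10" "angles_ordered th 1 5 7"
    "angles_ordered th 1 3 7" "angles_ordered th 1 4 7"
    "angles_ordered th 3 5 8" "angles_ordered th 2 8 9"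
    "angles_ordered th 6 7 10"
  and "pos_oriented r th 2 4 6" "pos_oriented r th 1 5 9"
    "pos_oriented r th 1 5 10" "pos_oriented r th 1 5 7"
  and "neg_oriented r th 1 3 7" "neg_oriented r th 1 4 7"
    "neg_oriented r th 3 5 8" "neg_oriented r th 2 8 9"
    "neg_oriented r th 6 7 10"
  shows "(let s = (\<lambda>i j. sind (th j - th i)) in
           s 8 9 * s 1 10 * s 2 4 * s 3 5 * s 6 7
         + s 4 6 * s 1 9 * s 7 10 * s 3 5 * s 2 8
         - s 4 6 * s 3 8 * s 7 10 * s 2 9 * s 1 5) > 0"
proof -
  define s where "s = (\<lambda>i j. sind (th j - th i))"
  define T where "T = triangle_form r th"
  define P where "P = s 8 9 * s 1 10 * s 2 4 * s 3 5 * s 6 7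
         + s 4 6 * s 1 9 * s 7 10 * s 3 5 * s 2 8
         - s 4 6 * s 3 8 * s 7 10 * s 2 9 * s 1 5"
  have sines: "0 < s 1 7" "0 < s 8 9" "0 < s 3 5" "0 < s 1 5" "0 < s 7 10" "0 < s 4 6"
    "0 < s 2 6" "0 < s 2 4" "0 < s 2 9" "0 < s 5 8" "0 < s 2 8" "0 < s 6 7"
    using assms(1-9)[THEN angles_ordered_sind_pos(1)] assms(1-9)[THEN angles_ordered_sind_pos(2)]
      assms(1-9)[THEN angles_ordered_sind_pos(3)]
    unfolding s_def by auto
  have pos: "0 < T 2 4 6" "0 < T 1 5 9" "0 < T 1 5 10" "0 < T 1 5 7"
    using assms(10-13) unfolding T_def pos_oriented_iff_triangle_form .
  have neg: "T 1 3 7 < 0" "T 1 4 7 < 0" "T 3 5 8 < 0" "T 2 8 9 < 0" "T 6 7 10 < 0"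
    using assms(14-18) unfolding T_def neg_oriented_iff_triangle_form .
  have "0 < s 1 7 * s 8 9 * s 3 5 * s 1 5 * s 7 10 * T 2 4 6"
    "0 < s 4 6 * s 2 8 * s 1 7 * s 3 5 * s 7 10 * T 1 5 9"
    "0 < s 2 4 * s 6 7 * s 1 7 * s 8 9 * s 3 5 * T 1 5 10"
    "s 4 6 * s 2 9 * s 5 8 * s 1 5 * s 7 10 * T 1 3 7 < 0"
    "s 2 6 * s 8 9 * s 3 5 * s 1 5 * s 7 10 * T 1 4 7 < 0"
    "s 4 6 * s 2 9 * s 1 7 * s 1 5 * s 7 10 * T 3 5 8 < 0"
    "s 4 6 * s 1 7 * s 3 5 * s 1 5 * s 7 10 * T 2 8 9 < 0"
    "s 2 4 * s 1 7 * s 8 9 * s 3 5 * s 1 5 * T 6 7 10 < 0"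
    using sines pos neg by (simp_all add: mult_pos_pos mult_pos_neg)
  then have "0 < P * T 1 5 7"
    unfolding P_def s_def T_def triangle_form_certificate by linarith
  then have "0 < P"
    using pos(4) by (rule zero_less_mult_pos2)
  then show ?thesis
    unfolding P_def s_def Let_def .
qed

end
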